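(* Let $(X,d)$ be a locally compact noncompact Polish space with compatible metric $d$, let $A$ be a nonzero C*-algebra, and let $Y_n\subseteq X$ ($n\in\mathbb N$) be infinite, compact, pairwise disjoint sets such that no compact subset of $X$ meets infinitely many $Y_n$. Then: (1) for every $f\in\mathbb N^{\mathbb N}$, $D_f$ is a C*-subalgebra of $C_b(X,A)$, and if $A$ is unital then $D_f$ is unital; (2) if $f_1\le^* f_2$ then $C_{f_1}\subseteq C_{f_2}$; (3) $C_b(X,A)=\bigcup_{f\in\mathbb N^{\mathbb N}}D_f$; (4) for every $f\in\mathbb N^{\mathbb N}$ there is $g\in C_b(X,A)$ with $\pi(g)\notin C_f$.
   Context: $\mathbb N^{\mathbb N}$ denotes the set of sequences $f\colon\mathbb N\to\mathbb N$ with $f(n)>0$ for all $n$; $f_1\le^* f_2$ means $f_1(n)\le f_2(n)$ for all but finitely many $n$. $C_b(X,A)$ is the C*-algebra of bounded continuous functions $X\to A$, $C_0(X,A)$ the ideal of those vanishing at infinity, $Q(X,A)=C_b(X,A)/C_0(X,A)$ and $\pi\colon C_b(X,A)\to Q(X,A)$ the quotient map. For $f\in\mathbb N^{\mathbb N}$, $D_f=D_f(X,A,Y_n)=\{g\in C_b(X,A)\mid \forall\epsilon>0\ \exists n_0\ \forall n\ge n_0\ \forall x,y\in Y_n\ (d(x,y)<1/f(n)\Rightarrow\|g(x)-g(y)\|<\epsilon)\}$, and $C_f=\pi(D_f)$. *)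

theory Defs
  imports "HOL-Analysis.Analysis"
begin

text \<open>The real structure comes from the HOL-Analysis classes; complex scalar
  multiplication is an extra operation compatible with it.\<close>

class cstar_algebra = banach + real_normed_algebra +
  fixes scaleC :: "complex \<Rightarrow> 'a \<Rightarrow> 'a"
    and cstar :: "'a \<Rightarrow> 'a"
  assumes scaleC_add_right: "scaleC c (x + y) = scaleC c x + scaleC c y"
    and scaleC_add_left: "scaleC (b + c) x = scaleC b x + scaleC c x"
    and scaleC_scaleC: "scaleC b (scaleC c x) = scaleC (b * c) x"
    and scaleC_one: "scaleC 1 x = x"
    and scaleC_of_real: "scaleC (of_real r) x = scaleR r x"
    and norm_scaleC: "norm (scaleC c x) = cmod c * norm x"
    and mult_scaleC_left: "scaleC c x * y = scaleC c (x * y)"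
    and mult_scaleC_right: "x * scaleC c y = scaleC c (x * y)"
    and cstar_add: "cstar (x + y) = cstar x + cstar y"
    and cstar_scaleC: "cstar (scaleC c x) = scaleC (cnj c) (cstar x)"
    and cstar_mult: "cstar (x * y) = cstar y * cstar x"
    and cstar_cstar: "cstar (cstar x) = x"
    and cstar_identity: "norm (cstar x * x) = norm x ^ 2"

definition unital_alg :: "'a::cstar_algebra itself \<Rightarrow> bool" where
  "unital_alg _ \<longleftrightarrow> (\<exists>u::'a. \<forall>x. u * x = x \<and> x * u = x)"

definition Cb :: "('x::topological_space \<Rightarrow> 'a::cstar_algebra) set" where
  "Cb = {g. continuous_on UNIV g \<and> bounded (range g)}"

definition C0 :: "('x::topological_space \<Rightarrow> 'a::cstar_algebra) set" where
  "C0 = {g. continuous_on UNIV g \<and>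
            (\<forall>e>0. \<exists>K. compact K \<and> (\<forall>x. x \<notin> K \<longrightarrow> norm (g x) < e))}"

text \<open>The quotient map pi : C_b(X,A) -> Q(X,A) = C_b/C_0, an element of Q
  being represented as the coset g + C_0.\<close>
definition piQ :: "('x::topological_space \<Rightarrow> 'a::cstar_algebra) \<Rightarrow> ('x \<Rightarrow> 'a) set" where
  "piQ g = {h \<in> Cb. (\<lambda>x. g x - h x) \<in> C0}"

definition cstar_subalgebra :: "('x::topological_space \<Rightarrow> 'a::cstar_algebra) set \<Rightarrow> bool" where
  "cstar_subalgebra D \<longleftrightarrow> D \<subseteq> Cb \<and> (\<lambda>x. 0) \<in> D \<and>
     (\<forall>g\<in>D. \<forall>h\<in>D. (\<lambda>x. g x + h x) \<in> D) \<and>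
     (\<forall>g\<in>D. \<forall>c. (\<lambda>x. scaleC c (g x)) \<in> D) \<and>
     (\<forall>g\<in>D. \<forall>h\<in>D. (\<lambda>x. g x * h x) \<in> D) \<and>
     (\<forall>g\<in>D. (\<lambda>x. cstar (g x)) \<in> D) \<and>
     (\<forall>g\<in>Cb. (\<forall>e>0. \<exists>h\<in>D. \<forall>x. norm (g x - h x) < e) \<longrightarrow> g \<in> D)"

definition unital_subalgebra :: "('x::topological_space \<Rightarrow> 'a::cstar_algebra) set \<Rightarrow> bool" where
  "unital_subalgebra D \<longleftrightarrow> (\<exists>u::'a. (\<forall>x. u * x = x \<and> x * u = x) \<and> (\<lambda>_. u) \<in> D)"

definition NN :: "(nat \<Rightarrow> nat) set" where
  "NN = {f. \<forall>n. f n > 0}"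

definition eventually_le :: "(nat \<Rightarrow> nat) \<Rightarrow> (nat \<Rightarrow> nat) \<Rightarrow> bool" where
  "eventually_le f1 f2 \<longleftrightarrow> (\<forall>\<^sub>F n in sequentially. f1 n \<le> f2 n)"

text \<open>D_f = D_f(X,A,Y_n), with the metric d = dist of the type.\<close>
definition Df :: "(nat \<Rightarrow> 'x::metric_space set) \<Rightarrow> (nat \<Rightarrow> nat) \<Rightarrow> ('x \<Rightarrow> 'a::cstar_algebra) set" where
  "Df Y f = {g \<in> Cb. \<forall>e>0. \<exists>n0. \<forall>n\<ge>n0. \<forall>x\<in>Y n. \<forall>y\<in>Y n.
              dist x y < 1 / real (f n) \<longrightarrow> norm (g x - g y) < e}"

definition Cf :: "(nat \<Rightarrow> 'x::metric_space set) \<Rightarrow> (nat \<Rightarrow> nat) \<Rightarrow> ('x \<Rightarrow> 'a::cstar_algebra) set set" where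
  "Cf Y f = piQ ` Df Y f"

end

theory Submission
  imports Defs
begin

text \<open>The class \<open>D\<^sub>f\<close> is defined by an estimate on \<open>\<parallel>g x - g y\<parallel>\<close> that holds
  eventually in \<open>n\<close>; it survives every operation whose increment is controlled
  linearly by the increments of its arguments (sums, products of bounded functions,
  bounded linear maps) and uniform limits, which gives (1). Enlarging \<open>f\<close> shrinks the
  pairs to be controlled, which gives (2). A bounded continuous \<open>g\<close> is uniformly
  continuous on each compact \<open>Y\<^sub>n\<close>; choosing \<open>1/f(n)\<close> below a modulus for the
  tolerance \<open>1/(n+1)\<close> gives (3). For (4), pick in each infinite compact \<open>Y\<^sub>n\<close> two
  distinct points \<open>p\<^sub>n, q\<^sub>n\<close> closer than \<open>1/f(n)\<close>. Local finiteness of the \<open>Y\<^sub>n\<close> makes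
  \<open>{p\<^sub>n}\<close> and \<open>{q\<^sub>n}\<close> disjoint closed sets, and an Urysohn function times a nonzero
  \<open>a \<in> A\<close> is \<open>a\<close> on the first and \<open>0\<close> on the second. Any \<open>h \<in> D\<^sub>f\<close> has
  \<open>\<parallel>h p\<^sub>n - h q\<^sub>n\<parallel> \<rightarrow> 0\<close>, and adding a function vanishing at infinity cannot restore the
  jump \<open>\<parallel>a\<parallel>\<close> on the \<open>Y\<^sub>n\<close> far outside every compact set.\<close>

lemma cstar_zero [simp]: "cstar 0 = (0::'a::cstar_algebra)"
  using cstar_add[of 0 0] by simp

lemma norm_cstar [simp]: "norm (cstar x) = norm (x::'a::cstar_algebra)"
proof -
  have "norm y \<le> norm (cstar y)" for y :: 'a
  proof (cases "y = 0")
    case False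
    have "norm y * norm y = norm (cstar y * y)"
      using cstar_identity[of y] by (simp add: power2_eq_square)
    also have "\<dots> \<le> norm (cstar y) * norm y" by (rule norm_mult_ineq)
    finally show ?thesis using False by simp
  qed simp
  from this[of x] this[of "cstar x"] show ?thesis by (simp add: cstar_cstar)
qed

lemma bounded_linear_cstar: "bounded_linear (cstar::'a::cstar_algebra \<Rightarrow> 'a)"
proof (rule bounded_linear_intro[where K=1])
  fix r and x :: 'a
  have "cstar (scaleR r x) = cstar (scaleC (of_real r) x)" by (simp add: scaleC_of_real)
  also have "\<dots> = scaleC (of_real r) (cstar x)" by (simp add: cstar_scaleC)
  finally show "cstar (scaleR r x) = scaleR r (cstar x)" by (simp add: scaleC_of_real)
qed (simp_all add: cstar_add)

lemma bounded_linear_scaleC: "bounded_linear (scaleC c::'a::cstar_algebra \<Rightarrow> 'a)"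
proof (rule bounded_linear_intro[where K="cmod c"])
  fix r and x :: 'a
  have "scaleC c (scaleR r x) = scaleC (c * of_real r) x"
    by (simp add: scaleC_scaleC flip: scaleC_of_real)
  also have "\<dots> = scaleC (of_real r) (scaleC c x)" by (simp add: scaleC_scaleC mult.commute)
  finally show "scaleC c (scaleR r x) = scaleR r (scaleC c x)" by (simp add: scaleC_of_real)
qed (simp_all add: scaleC_add_right norm_scaleC mult.commute)

lemma Cb_iff: "g \<in> Cb \<longleftrightarrow> continuous_on UNIV g \<and> (\<exists>B. \<forall>x. norm (g x) \<le> B)"
  by (simp add: Cb_def bounded_iff)

lemma Cb_boundE:
  assumes "g \<in> Cb"
  obtains B where "B > 0" "\<And>x. norm (g x) \<le> B"
proof -
  obtain B where B: "\<And>x. norm (g x) \<le> B" using assms Cb_iff by blast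
  have "norm (g x) \<le> \<bar>B\<bar> + 1" for x using B[of x] abs_ge_self[of B] by linarith
  then show ?thesis by (intro that[of "\<bar>B\<bar> + 1"]) auto
qed

lemma Cb_add:
  assumes "g \<in> Cb" "h \<in> Cb"
  shows "(\<lambda>x. g x + h x) \<in> Cb"
proof -
  obtain B1 B2 where "\<And>x. norm (g x) \<le> B1" "\<And>x. norm (h x) \<le> B2"
    using assms Cb_iff by metis
  then have "norm (g x + h x) \<le> B1 + B2" for x
    by (meson add_mono norm_triangle_le)
  with assms show ?thesis by (auto simp: Cb_iff intro!: continuous_on_add)
qed

lemma Cb_mult:
  assumes "g \<in> Cb" "h \<in> Cb"
  shows "(\<lambda>x. g x * h x) \<in> Cb"
proof -
  obtain B1 B2 where "\<And>x. norm (g x) \<le> B1" "\<And>x. norm (h x) \<le> B2"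
    using assms Cb_iff by metis
  then have "norm (g x * h x) \<le> B1 * B2" for x
    by (meson norm_ge_zero norm_mult_ineq order_trans mult_mono)
  with assms show ?thesis by (auto simp: Cb_iff intro!: continuous_on_mult)
qed

lemma Cb_bounded_linear_comp:
  assumes "bounded_linear L" "g \<in> Cb"
  shows "(\<lambda>x. L (g x)) \<in> Cb"
proof -
  interpret L: bounded_linear L by fact
  obtain K where K: "K > 0" "\<And>x. norm (L x) \<le> norm x * K" using L.pos_bounded by blast
  obtain B where "\<And>x. norm (g x) \<le> B" using assms(2) Cb_iff by blast
  with K have "norm (L (g x)) \<le> B * K" for x
    by (meson order_trans mult_right_mono less_imp_le)
  with assms(2) show ?thesis by (auto simp: Cb_iff intro!: L.continuous_on)
qed

lemma Df_iff_eventually: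
  "g \<in> Df Y f \<longleftrightarrow> g \<in> Cb \<and> (\<forall>e>0. \<forall>\<^sub>F n in sequentially. \<forall>x\<in>Y n. \<forall>y\<in>Y n.
      dist x y < 1 / real (f n) \<longrightarrow> norm (g x - g y) < e)"
  by (simp add: Df_def eventually_sequentially)

lemma Df_subset_Cb: "Df Y f \<subseteq> Cb"
  by (auto simp: Df_def)

lemma Df_const: "(\<lambda>x. c) \<in> Df Y f"
  by (auto simp: Df_iff_eventually Cb_iff)

lemma Df_if_increment_bounded:
  assumes k: "k \<in> Cb" and g: "g \<in> Df Y f" and h: "h \<in> Df Y f" and C: "C > 0"
    and incr: "\<And>x y. norm (k x - k y) \<le> C * (norm (g x - g y) + norm (h x - h y))"
  shows "k \<in> Df Y f"
proof -
  have "\<forall>\<^sub>F n in sequentially. \<forall>x\<in>Y n. \<forall>y\<in>Y n.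
          dist x y < 1 / real (f n) \<longrightarrow> norm (k x - k y) < 2 * C * d" if "d > 0" for d
  proof -
    have "\<forall>\<^sub>F n in sequentially. \<forall>x\<in>Y n. \<forall>y\<in>Y n.
        dist x y < 1 / real (f n) \<longrightarrow> norm (g x - g y) < d"
      and "\<forall>\<^sub>F n in sequentially. \<forall>x\<in>Y n. \<forall>y\<in>Y n.
        dist x y < 1 / real (f n) \<longrightarrow> norm (h x - h y) < d"
      using g h \<open>d > 0\<close> unfolding Df_iff_eventually by blast+
    then show ?thesis
    proof eventually_elim
      case (elim n)
      show ?case
      proof (intro ballI impI)
        fix x y assume "x \<in> Y n" "y \<in> Y n" "dist x y < 1 / real (f n)"
        with elim have "norm (g x - g y) < d" "norm (h x - h y) < d" by blast+
        with C have "C * (norm (g x - g y) + norm (h x - h y)) < C * (2 * d)"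
          by (intro mult_strict_left_mono) auto
        with incr[of x y] show "norm (k x - k y) < 2 * C * d" by linarith
      qed
    qed
  qed
  from this[of "e / (2 * C)" for e] k C show ?thesis by (simp add: Df_iff_eventually)
qed

lemma Df_add:
  assumes "g \<in> Df Y f" "h \<in> Df Y f"
  shows "(\<lambda>x. g x + h x) \<in> Df Y f"
proof (rule Df_if_increment_bounded[OF _ assms zero_less_one])
  show "(\<lambda>x. g x + h x) \<in> Cb" using assms Df_subset_Cb by (blast intro: Cb_add)
qed (simp add: norm_diff_triangle_ineq)

lemma Df_mult:
  assumes g: "g \<in> Df Y f" and h: "h \<in> Df Y f"
  shows "(\<lambda>x. g x * h x) \<in> Df Y f"
proof -
  obtain B1 where B1: "B1 > 0" "\<And>x. norm (g x) \<le> B1" using g Df_subset_Cb Cb_boundE by blast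
  obtain B2 where B2: "B2 > 0" "\<And>x. norm (h x) \<le> B2" using h Df_subset_Cb Cb_boundE by blast
  have "(\<lambda>x. g x * h x) \<in> Cb" using assms Df_subset_Cb by (blast intro: Cb_mult)
  then show ?thesis
  proof (rule Df_if_increment_bounded[OF _ g h])
    show "B1 + B2 > 0" using B1(1) B2(1) by simp
    fix x y
    have "norm (g x * h x - g y * h y) = norm (g x * (h x - h y) + (g x - g y) * h y)"
      by (simp add: algebra_simps)
    also have "\<dots> \<le> norm (g x) * norm (h x - h y) + norm (g x - g y) * norm (h y)"
      by (intro norm_triangle_le add_mono norm_mult_ineq)
    also have "\<dots> \<le> B1 * norm (h x - h y) + norm (g x - g y) * B2"
      using B1(2) B2(2) by (intro add_mono mult_right_mono mult_left_mono) auto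
    also have "\<dots> \<le> (B1 + B2) * (norm (g x - g y) + norm (h x - h y))"
      using B1(1) B2(1) by (simp add: algebra_simps)
    finally show "norm (g x * h x - g y * h y) \<le> (B1 + B2) * (norm (g x - g y) + norm (h x - h y))" .
  qed
qed

lemma Df_bounded_linear_comp:
  assumes L: "bounded_linear L" and g: "g \<in> Df Y f"
  shows "(\<lambda>x. L (g x)) \<in> Df Y f"
proof -
  interpret L: bounded_linear L by fact
  obtain K where K: "K > 0" "\<And>x. norm (L x) \<le> norm x * K" using L.pos_bounded by blast
  have "(\<lambda>x. L (g x)) \<in> Cb" using L g Df_subset_Cb by (blast intro: Cb_bounded_linear_comp)
  then show ?thesis
  proof (rule Df_if_increment_bounded[OF _ g g K(1)])
    fix x y
    have "norm (L (g x) - L (g y)) \<le> K * norm (g x - g y)"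
      using K(2)[of "g x - g y"] by (simp add: L.diff mult.commute)
    also have "\<dots> \<le> K * (norm (g x - g y) + norm (g x - g y))" using K(1) by simp
    finally show "norm (L (g x) - L (g y)) \<le> K * (norm (g x - g y) + norm (g x - g y))" .
  qed
qed

lemma Df_closed_uniform_limit:
  assumes g: "g \<in> Cb" and approx: "\<forall>e>0. \<exists>h\<in>Df Y f. \<forall>x. norm (g x - h x) < e"
  shows "g \<in> Df Y f"
proof -
  have "\<forall>\<^sub>F n in sequentially. \<forall>x\<in>Y n. \<forall>y\<in>Y n.
          dist x y < 1 / real (f n) \<longrightarrow> norm (g x - g y) < 3 * d" if "d > 0" for d
  proof -
    obtain h where h: "h \<in> Df Y f" "\<And>x. norm (g x - h x) < d" using approx \<open>d > 0\<close> by blast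
    with \<open>d > 0\<close> have "\<forall>\<^sub>F n in sequentially. \<forall>x\<in>Y n. \<forall>y\<in>Y n.
          dist x y < 1 / real (f n) \<longrightarrow> norm (h x - h y) < d"
      unfolding Df_iff_eventually by blast
    then show ?thesis
    proof (rule eventually_mono, intro ballI impI)
      fix n x y assume "\<forall>x\<in>Y n. \<forall>y\<in>Y n. dist x y < 1 / real (f n) \<longrightarrow> norm (h x - h y) < d"
        and "x \<in> Y n" "y \<in> Y n" "dist x y < 1 / real (f n)"
      then have "norm (h x - h y) < d" by blast
      moreover have "norm (h y - g y) < d" using h(2)[of y] by (simp add: norm_minus_commute)
      ultimately have "norm (g x - g y) < d + (d + d)"
        using h(2)[of x] by (intro norm_diff_triangle_less) auto
      then show "norm (g x - g y) < 3 * d" by simp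
    qed
  qed
  from this[of "e / 3" for e] g show ?thesis by (simp add: Df_iff_eventually)
qed

lemma cstar_subalgebra_Df: "cstar_subalgebra (Df Y f)"
  unfolding cstar_subalgebra_def
proof (intro conjI ballI allI impI)
  show "\<And>g c. g \<in> Df Y f \<Longrightarrow> (\<lambda>x. scaleC c (g x)) \<in> Df Y f"
    using bounded_linear_scaleC by (rule Df_bounded_linear_comp)
  show "\<And>g. g \<in> Df Y f \<Longrightarrow> (\<lambda>x. cstar (g x)) \<in> Df Y f"
    using bounded_linear_cstar by (rule Df_bounded_linear_comp)
qed (simp_all add: Df_subset_Cb Df_const Df_add Df_mult Df_closed_uniform_limit)

lemma unital_subalgebra_Df:
  assumes "unital_alg TYPE('a::cstar_algebra)"
  shows "unital_subalgebra (Df Y f :: ('x::metric_space \<Rightarrow> 'a) set)"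
  using assms Df_const unfolding unital_alg_def unital_subalgebra_def by blast

lemma Df_mono:
  assumes f1: "f1 \<in> NN" and le: "eventually_le f1 f2"
  shows "Df Y f1 \<subseteq> Df Y f2"
proof
  fix g assume g: "g \<in> Df Y f1"
  have "\<forall>\<^sub>F n in sequentially. \<forall>x\<in>Y n. \<forall>y\<in>Y n.
          dist x y < 1 / real (f2 n) \<longrightarrow> norm (g x - g y) < e" if "e > 0" for e
  proof -
    have "\<forall>\<^sub>F n in sequentially. 1 / real (f2 n) \<le> 1 / real (f1 n)"
      using le f1 unfolding eventually_le_def NN_def by (auto elim!: eventually_mono intro: frac_le)
    moreover have "\<forall>\<^sub>F n in sequentially. \<forall>x\<in>Y n. \<forall>y\<in>Y n.
          dist x y < 1 / real (f1 n) \<longrightarrow> norm (g x - g y) < e"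
      using g \<open>e > 0\<close> by (simp add: Df_iff_eventually)
    ultimately show ?thesis by eventually_elim (meson order_less_le_trans)
  qed
  with g show "g \<in> Df Y f2" by (simp add: Df_iff_eventually)
qed

lemma Cf_mono: "f1 \<in> NN \<Longrightarrow> eventually_le f1 f2 \<Longrightarrow> Cf Y f1 \<subseteq> Cf Y f2"
  unfolding Cf_def by (intro image_mono Df_mono)

lemma Cb_imp_ex_Df:
  fixes g :: "'x::metric_space \<Rightarrow> 'a::cstar_algebra"
  assumes g: "g \<in> Cb" and Y_compact: "\<And>n. compact (Y n)"
  shows "\<exists>f\<in>NN. g \<in> Df Y f"
proof -
  have "\<exists>d>0. \<forall>x\<in>Y n. \<forall>y\<in>Y n. dist x y < d \<longrightarrow> norm (g x - g y) < inverse (real (Suc n))" for n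
  proof -
    have "uniformly_continuous_on (Y n) g"
      using g Y_compact[of n] unfolding Cb_iff
      by (metis compact_uniformly_continuous continuous_on_subset subset_UNIV)
    then show ?thesis unfolding uniformly_continuous_on_def dist_norm[symmetric]
      by (metis of_nat_0_less_iff positive_imp_inverse_positive zero_less_Suc dist_commute)
  qed
  then obtain d where d: "\<And>n. d n > 0"
    "\<And>n x y. x \<in> Y n \<Longrightarrow> y \<in> Y n \<Longrightarrow> dist x y < d n \<Longrightarrow> norm (g x - g y) < inverse (real (Suc n))"
    by metis
  define f where "f n = nat \<lceil>1 / d n\<rceil> + 1" for n
  have "f \<in> NN" by (simp add: f_def NN_def)
  have f_le_d: "1 / real (f n) \<le> d n" for n
  proof -
    have "1 / d n \<le> real (f n)" "real (f n) > 0" unfolding f_def by linarith+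
    with d(1)[of n] show ?thesis by (simp add: field_simps)
  qed
  have "\<forall>\<^sub>F n in sequentially. \<forall>x\<in>Y n. \<forall>y\<in>Y n.
          dist x y < 1 / real (f n) \<longrightarrow> norm (g x - g y) < e" if "e > 0" for e
  proof -
    have "\<forall>\<^sub>F n in sequentially. inverse (real (Suc n)) < e"
      using LIMSEQ_inverse_real_of_nat \<open>e > 0\<close> by (rule order_tendstoD)
    then show ?thesis
    proof (rule eventually_mono, intro ballI impI)
      fix n x y assume "inverse (real (Suc n)) < e" "x \<in> Y n" "y \<in> Y n" "dist x y < 1 / real (f n)"
      with f_le_d[of n] d(2)[of x n y] show "norm (g x - g y) < e" by linarith
    qed
  qed
  with g \<open>f \<in> NN\<close> show ?thesis by (auto simp: Df_iff_eventually)
qed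

lemma Cb_eq_Union_Df:
  fixes Y :: "nat \<Rightarrow> 'x::metric_space set"
  assumes "\<And>n. compact (Y n)"
  shows "(Cb :: ('x \<Rightarrow> 'a::cstar_algebra) set) = (\<Union>f\<in>NN. Df Y f)"
proof (intro equalityI subsetI)
  fix g :: "'x \<Rightarrow> 'a" assume "g \<in> Cb"
  with assms obtain f where "f \<in> NN" "g \<in> Df Y f" using Cb_imp_ex_Df by blast
  then show "g \<in> (\<Union>f\<in>NN. Df Y f)" by blast
qed (use Df_subset_Cb in blast)

lemma closed_if_finite_Int_locally_finite_cover:
  fixes Y :: "nat \<Rightarrow> 'x::metric_space set"
  assumes lc: "locally_compact_space (euclidean :: 'x topology)"
    and Y_loc_fin: "\<And>K. compact K \<Longrightarrow> finite {n. Y n \<inter> K \<noteq> {}}"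
    and fin: "\<And>n. finite (S \<inter> Y n)" and cover: "S \<subseteq> (\<Union>n. Y n)"
  shows "closed S"
proof -
  have "z \<in> S" if z: "z \<in> closure S" for z
  proof -
    obtain U K where UK: "open U" "compact K" "z \<in> U" "U \<subseteq> K"
      using lc unfolding locally_compact_space_def by simp meson
    have "S \<inter> K \<subseteq> (\<Union>n\<in>{n. Y n \<inter> K \<noteq> {}}. S \<inter> Y n)" using cover by blast
    moreover have "finite (\<Union>n\<in>{n. Y n \<inter> K \<noteq> {}}. S \<inter> Y n)"
      using Y_loc_fin[OF UK(2)] fin by blast
    ultimately have "finite (S \<inter> K)" by (rule finite_subset)
    have "z \<in> closure (U \<inter> S)" using open_Int_closure_subset[OF UK(1)] z UK(3) by blast
    also have "\<dots> \<subseteq> closure (S \<inter> K)" using UK(4) by (intro closure_mono) blast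
    also have "\<dots> = S \<inter> K" using \<open>finite (S \<inter> K)\<close> by (simp add: finite_imp_closed)
    finally show ?thesis by blast
  qed
  then show ?thesis using closure_subset_eq by blast
qed

lemma metric_Urysohn:
  fixes S T :: "'x::metric_space set"
  assumes "closed S" "closed T" "S \<inter> T = {}"
  obtains \<phi> :: "'x \<Rightarrow> real" where "continuous_on UNIV \<phi>" "\<And>x. \<phi> x \<in> {0..1}"
    "\<And>x. x \<in> S \<Longrightarrow> \<phi> x = 1" "\<And>x. x \<in> T \<Longrightarrow> \<phi> x = 0"
proof -
  have "normal_space (euclidean :: 'x topology)"
    by (simp add: metrizable_imp_normal_space metrizable_space_euclidean)
  then obtain \<phi> :: "'x \<Rightarrow> real" where "continuous_map euclidean (top_of_set {0..1}) \<phi>"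
    "\<phi> ` T \<subseteq> {0}" "\<phi> ` S \<subseteq> {1}"
    using assms unfolding normal_space_iff_Urysohn by (metis closed_closedin disjnt_def inf_commute)
  then show ?thesis
    by (intro that[of \<phi>]) (auto simp: continuous_map_in_subtopology)
qed

lemma compact_infinite_close_pointsE:
  fixes S :: "'x::metric_space set"
  assumes "compact S" "infinite S" "r > 0"
  obtains p q where "p \<in> S" "q \<in> S" "p \<noteq> q" "dist p q < r"
proof -
  obtain z where "z \<in> S" "z islimpt S"
    using Heine_Borel_imp_Bolzano_Weierstrass[OF assms(1,2) subset_refl] by blast
  with assms(3) show ?thesis
    unfolding islimpt_approachable by (metis that)
qed

lemma piQ_eq_imp_diff_C0:
  assumes "g \<in> Cb" "piQ g = piQ h"
  shows "(\<lambda>x. h x - g x) \<in> C0"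
proof -
  have "g \<in> piQ g" using assms(1) unfolding piQ_def C0_def by auto
  with assms(2) show ?thesis unfolding piQ_def by auto
qed

lemma piQ_notin_Cf_if_jumps:
  fixes g :: "'x::metric_space \<Rightarrow> 'a::cstar_algebra"
  assumes Y_loc_fin: "\<And>K. compact K \<Longrightarrow> finite {n. Y n \<inter> K \<noteq> {}}"
    and g: "g \<in> Cb" and c: "c > 0"
    and pq: "\<And>n. p n \<in> Y n" "\<And>n. q n \<in> Y n" "\<And>n. dist (p n) (q n) < 1 / real (f n)"
    and jump: "\<And>n. c \<le> norm (g (p n) - g (q n))"
  shows "piQ g \<notin> Cf Y f"
proof
  assume "piQ g \<in> Cf Y f"
  then obtain h where h: "h \<in> Df Y f" "piQ g = piQ h" unfolding Cf_def by blast
  have "c / 3 > 0" using c by simp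
  then obtain K where K: "compact K" "\<And>x. x \<notin> K \<Longrightarrow> norm (h x - g x) < c / 3"
    using piQ_eq_imp_diff_C0[OF g h(2)] unfolding C0_def by blast
  have "\<forall>\<^sub>F n in sequentially. Y n \<inter> K = {}"
    using Y_loc_fin[OF K(1)] by (simp add: eventually_cofinite flip: cofinite_eq_sequentially)
  moreover have "\<forall>\<^sub>F n in sequentially. norm (h (p n) - h (q n)) < c / 3"
    using h(1) c pq unfolding Df_iff_eventually by (force elim!: allE[of _ "c / 3"] eventually_mono)
  ultimately obtain n where "Y n \<inter> K = {}" "norm (h (p n) - h (q n)) < c / 3"
    using eventually_happens'[OF sequentially_bot eventually_conj] by blast
  then have "p n \<notin> K" "q n \<notin> K" and near: "norm (h (p n) - h (q n)) < c / 3" using pq by auto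
  then have "norm (g (p n) - h (p n)) < c / 3" "norm (h (q n) - g (q n)) < c / 3"
    using K(2) by (auto simp: norm_minus_commute)
  with near have "norm (g (p n) - g (q n)) < c / 3 + (c / 3 + c / 3)"
    by (intro norm_diff_triangle_less) auto
  with jump[of n] show False by simp
qed

lemma exists_Cb_piQ_notin_Cf:
  fixes Y :: "nat \<Rightarrow> 'x::metric_space set"
  assumes lc: "locally_compact_space (euclidean :: 'x topology)"
    and nonzero: "\<exists>a::'a::cstar_algebra. a \<noteq> 0"
    and Y_inf: "\<And>n. infinite (Y n)" and Y_compact: "\<And>n. compact (Y n)"
    and Y_disj: "\<And>m n. m \<noteq> n \<Longrightarrow> Y m \<inter> Y n = {}"
    and Y_loc_fin: "\<And>K. compact K \<Longrightarrow> finite {n. Y n \<inter> K \<noteq> {}}"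
    and f: "f \<in> NN"
  shows "\<exists>g\<in>(Cb :: ('x \<Rightarrow> 'a) set). piQ g \<notin> Cf Y f"
proof -
  obtain a :: 'a where "a \<noteq> 0" using nonzero by blast
  have "\<exists>p q. p \<in> Y n \<and> q \<in> Y n \<and> p \<noteq> q \<and> dist p q < 1 / real (f n)" for n
  proof -
    have "1 / real (f n) > 0" using f by (simp add: NN_def)
    then show ?thesis by (rule compact_infinite_close_pointsE[OF Y_compact Y_inf]) blast
  qed
  then obtain p q where pq: "\<And>n. p n \<in> Y n" "\<And>n. q n \<in> Y n" "\<And>n. p n \<noteq> q n"
    "\<And>n. dist (p n) (q n) < 1 / real (f n)" by metis
  have index_unique: "r m \<in> Y n \<Longrightarrow> m = n" if "\<And>n. r n \<in> Y n" for r m n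
    using that[of m] Y_disj[of m n] by blast
  have closed_range: "closed (range r)" if r: "\<And>n. r n \<in> Y n" for r
  proof (rule closed_if_finite_Int_locally_finite_cover[OF lc Y_loc_fin])
    show "finite (range r \<inter> Y n)" for n
      by (rule finite_subset[of _ "{r n}"]) (auto dest: index_unique[OF r])
    show "range r \<subseteq> (\<Union>n. Y n)" using r by blast
  qed
  have disjoint: "range p \<inter> range q = {}"
  proof (intro equalityI subsetI)
    fix z assume "z \<in> range p \<inter> range q"
    then obtain m n where "z = p m" "z = q n" by blast
    with pq(2)[of n] have "m = n" by (metis index_unique[OF pq(1)])
    with \<open>z = p m\<close> \<open>z = q n\<close> pq(3)[of n] show "z \<in> {}" by simp
  qed simp
  obtain \<phi> :: "'x \<Rightarrow> real" where \<phi>: "continuous_on UNIV \<phi>" "\<And>x. \<phi> x \<in> {0..1}"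
    "\<And>x. x \<in> range p \<Longrightarrow> \<phi> x = 1" "\<And>x. x \<in> range q \<Longrightarrow> \<phi> x = 0"
    using metric_Urysohn[OF closed_range[OF pq(1)] closed_range[OF pq(2)] disjoint] by blast
  define g where "g x = \<phi> x *\<^sub>R a" for x
  have "norm (g x) \<le> norm a" for x using \<phi>(2)[of x] by (simp add: g_def mult_left_le_one_le)
  with \<phi>(1) have "g \<in> Cb" unfolding Cb_iff g_def by (auto intro!: continuous_intros)
  moreover have "norm a \<le> norm (g (p n) - g (q n))" for n by (simp add: g_def \<phi>(3,4))
  then have "piQ g \<notin> Cf Y f"
    using \<open>a \<noteq> 0\<close> by (intro piQ_notin_Cf_if_jumps[OF Y_loc_fin \<open>g \<in> Cb\<close> _ pq(1,2,4)]) auto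
  ultimately show ?thesis by blast
qed

theorem proposition2p3:
  fixes Y :: "nat \<Rightarrow> 'x::metric_space set"
  assumes polish: "completely_metrizable_space (euclidean :: 'x topology)"
                  "separable_space (euclidean :: 'x topology)"
    and lc: "locally_compact_space (euclidean :: 'x topology)"
    and noncompact: "\<not> compact (UNIV :: 'x set)"
    and nonzero: "\<exists>a::'a::cstar_algebra. a \<noteq> 0"
    and Y_inf: "\<And>n. infinite (Y n)"
    and Y_compact: "\<And>n. compact (Y n)"
    and Y_disj: "\<And>m n. m \<noteq> n \<Longrightarrow> Y m \<inter> Y n = {}"
    and Y_loc_fin: "\<And>K. compact K \<Longrightarrow> finite {n. Y n \<inter> K \<noteq> {}}"
  shows "(\<forall>f\<in>NN. cstar_subalgebra (Df Y f :: ('x \<Rightarrow> 'a) set) \<and>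
            (unital_alg TYPE('a) \<longrightarrow> unital_subalgebra (Df Y f :: ('x \<Rightarrow> 'a) set)))
       \<and> (\<forall>f1\<in>NN. \<forall>f2\<in>NN. eventually_le f1 f2 \<longrightarrow>
            (Cf Y f1 :: ('x \<Rightarrow> 'a) set set) \<subseteq> Cf Y f2)
       \<and> (Cb :: ('x \<Rightarrow> 'a) set) = (\<Union>f\<in>NN. Df Y f)
       \<and> (\<forall>f\<in>NN. \<exists>g\<in>(Cb :: ('x \<Rightarrow> 'a) set). piQ g \<notin> Cf Y f)"
proof (intro conjI ballI impI)
  fix f assume "f \<in> NN"
  show "cstar_subalgebra (Df Y f :: ('x \<Rightarrow> 'a) set)" by (rule cstar_subalgebra_Df)
  show "\<exists>g\<in>(Cb :: ('x \<Rightarrow> 'a) set). piQ g \<notin> Cf Y f"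
    by (rule exists_Cb_piQ_notin_Cf[OF lc nonzero Y_inf Y_compact Y_disj Y_loc_fin \<open>f \<in> NN\<close>])
next
  fix f assume "unital_alg TYPE('a)"
  then show "unital_subalgebra (Df Y f :: ('x \<Rightarrow> 'a) set)" by (rule unital_subalgebra_Df)
next
  fix f1 f2 assume "f1 \<in> NN" "eventually_le f1 f2"
  then show "(Cf Y f1 :: ('x \<Rightarrow> 'a) set set) \<subseteq> Cf Y f2" by (rule Cf_mono)
next
  show "(Cb :: ('x \<Rightarrow> 'a) set) = (\<Union>f\<in>NN. Df Y f)" using Y_compact by (rule Cb_eq_Union_Df)
qed

end
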